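(* Let $K$ be a field (of arbitrary characteristic) and $V$ a homogeneous $K$-subspace of $K[x]$. Then $V$ is a Mathieu subspace of $K[x]$ if and only if one of the following holds: 1) $V=K[x]$; 2) $\dim_K V<\infty$ and $1\notin V$; 3) $1\notin V$ and there exists $N\ge1$ such that the ideal $x^NK[x]$ is contained in $V$; 4) $V$ is spanned over $K$ by the monomials $x^{n_i}$ for a strictly increasing infinite sequence of positive integers $\{n_i\mid i\ge1\}$ such that there is no integer $d\ge1$ with $md\in\{n_i\mid i\ge1\}$ for all $m\ge1$.
   Context: A $K$-subspace $V$ of $K[x]$ is homogeneous if it is spanned by the monomials $x^n$ it contains (equivalently, the homogeneous components of each element of $V$ lie in $V$). A $K$-subspace $V$ of a commutative $K$-algebra $\mathcal{A}$ is a Mathieu subspace if for all $a,b\in\mathcal{A}$ with $a^m\in V$ for all $m\ge 1$, one has $a^mb\in V$ for all $m\gg 0$. *)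

theory Defs
  imports "HOL-Computational_Algebra.Polynomial"
begin

definition poly_span :: "'a::field poly set \<Rightarrow> 'a poly set" where
  "poly_span S = {(\<Sum>s\<in>F. smult (c s) s) | F c. finite F \<and> F \<subseteq> S}"

definition poly_subspace :: "'a::field poly set \<Rightarrow> bool" where
  "poly_subspace V \<longleftrightarrow> 0 \<in> V \<and> (\<forall>p\<in>V. \<forall>q\<in>V. p + q \<in> V) \<and> (\<forall>c. \<forall>p\<in>V. smult c p \<in> V)"

definition homogeneous_subspace :: "'a::field poly set \<Rightarrow> bool" where
  "homogeneous_subspace V \<longleftrightarrow> poly_subspace V \<and> V = poly_span {monom 1 n | n. monom 1 n \<in> V}"

definition finite_dim :: "'a::field poly set \<Rightarrow> bool" where
  "finite_dim V \<longleftrightarrow> (\<exists>S. finite S \<and> V \<subseteq> poly_span S)"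

definition mathieu_subspace :: "'a::field poly set \<Rightarrow> bool" where
  "mathieu_subspace V \<longleftrightarrow> poly_subspace V \<and>
     (\<forall>a b. (\<forall>m\<ge>1. a ^ m \<in> V) \<longrightarrow> (\<exists>N. \<forall>m\<ge>N. a ^ m * b \<in> V))"

end

theory Submission
  imports Defs "HOL-Library.Infinite_Set"
begin

text \<open>A homogeneous subspace is determined by the set S of exponents of the monomials it
contains. If all powers of a nonzero a lie in such a subspace, the leading terms of the powers
show that S contains every multiple of d = deg a. When 1 is not in the subspace, d \<ge> 1, so if S
contains no full set of positive multiples, only a = 0 qualifies and the Mathieu condition holds
vacuously; conversely, applying the Mathieu condition to a = x^d for such a d puts every x^k with
k large into the subspace. When the subspace contains an ideal x^N K[x], the remaining case is
handled by noting that a has zero constant term, so that x^m divides a^m.\<close>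

definition monomial_exponents :: "'a::field poly set \<Rightarrow> nat set" where
  "monomial_exponents V = {n. monom 1 n \<in> V}"

lemma coeff_in_poly_span:
  assumes "p \<in> poly_span M" "coeff p k \<noteq> 0"
  shows "\<exists>s\<in>M. coeff s k \<noteq> 0"
proof -
  obtain F c where F: "finite F" "F \<subseteq> M" "p = (\<Sum>s\<in>F. smult (c s) s)"
    using assms(1) unfolding poly_span_def by auto
  then have "coeff p k = (\<Sum>s\<in>F. c s * coeff s k)"
    by (simp add: coeff_sum)
  with assms(2) F(2) show ?thesis
    by (metis (no_types, lifting) mult_zero_right subsetD sum.neutral)
qed

lemma coeff_in_poly_span_monoms:
  assumes "p \<in> poly_span (monom 1 ` A)" "coeff p k \<noteq> 0"
  shows "k \<in> A"
  using coeff_in_poly_span[OF assms] by (auto split: if_splits)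

lemma degree_in_poly_span_le:
  assumes "finite T" "p \<in> poly_span T"
  shows "degree p \<le> (\<Sum>s\<in>T. degree s)"
proof (cases "p = 0")
  case False
  then have "coeff p (degree p) \<noteq> 0"
    by simp
  then obtain s where "s \<in> T" "coeff s (degree p) \<noteq> 0"
    using coeff_in_poly_span[OF assms(2)] by blast
  then have "degree p \<le> degree s"
    by (simp add: le_degree)
  also have "\<dots> \<le> (\<Sum>s\<in>T. degree s)"
    using assms(1) \<open>s \<in> T\<close> by (simp add: member_le_sum)
  finally show ?thesis .
qed simp

lemma poly_subspace_sum:
  assumes "poly_subspace V" "finite A" "\<And>i. i \<in> A \<Longrightarrow> f i \<in> V"
  shows "sum f A \<in> V"
  using assms(2,3) by induction (use assms(1) in \<open>auto simp: poly_subspace_def\<close>)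

lemma poly_subspace_monomsI:
  assumes "poly_subspace V" "\<And>i. coeff p i \<noteq> 0 \<Longrightarrow> monom 1 i \<in> V"
  shows "p \<in> V"
proof -
  have "monom (coeff p i) i \<in> V" for i
  proof (cases "coeff p i = 0")
    case False
    then have "smult (coeff p i) (monom 1 i) \<in> V"
      using assms by (simp add: poly_subspace_def)
    then show ?thesis
      by (simp add: smult_monom)
  qed (use assms(1) in \<open>simp add: poly_subspace_def\<close>)
  then have "(\<Sum>i\<le>degree p. monom (coeff p i) i) \<in> V"
    by (intro poly_subspace_sum[OF assms(1)]) auto
  then show ?thesis
    by (simp add: poly_as_sum_of_monoms)
qed

lemma homogeneous_subspace_imp_poly_subspace:
  "homogeneous_subspace V \<Longrightarrow> poly_subspace V"
  unfolding homogeneous_subspace_def by (rule conjunct1)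

lemma homogeneous_subspace_eq_span:
  assumes "homogeneous_subspace V"
  shows "V = poly_span (monom 1 ` monomial_exponents V)"
proof -
  have "V = poly_span {monom 1 n | n. monom 1 n \<in> V}"
    using assms unfolding homogeneous_subspace_def by (rule conjunct2)
  also have "{monom 1 n | n. monom 1 n \<in> V} = monom 1 ` monomial_exponents V"
    by (auto simp: monomial_exponents_def)
  finally show ?thesis .
qed

lemma homogeneous_subspace_mem_iff:
  assumes "homogeneous_subspace V"
  shows "p \<in> V \<longleftrightarrow> (\<forall>i. coeff p i \<noteq> 0 \<longrightarrow> i \<in> monomial_exponents V)"
proof
  assume "p \<in> V"
  then show "\<forall>i. coeff p i \<noteq> 0 \<longrightarrow> i \<in> monomial_exponents V"
    using coeff_in_poly_span_monoms homogeneous_subspace_eq_span[OF assms] by blast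
next
  assume "\<forall>i. coeff p i \<noteq> 0 \<longrightarrow> i \<in> monomial_exponents V"
  then show "p \<in> V"
    using homogeneous_subspace_imp_poly_subspace[OF assms] poly_subspace_monomsI
    by (auto simp: monomial_exponents_def)
qed

lemma homogeneous_powers_degree_multiples:
  assumes "homogeneous_subspace V" "\<forall>m\<ge>1. a ^ m \<in> V" "a \<noteq> 0" "m \<ge> 1"
  shows "m * degree a \<in> monomial_exponents V"
proof -
  have "coeff (a ^ m) (m * degree a) \<noteq> 0"
    using assms(3) by (simp add: degree_power_eq[symmetric] lead_coeff_power)
  then show ?thesis
    using assms homogeneous_subspace_mem_iff by blast
qed

lemma one_in_iff_zero_exponent: "1 \<in> V \<longleftrightarrow> 0 \<in> monomial_exponents V"
  by (simp add: monomial_exponents_def)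

lemma finite_imp_not_all_multiples:
  assumes "finite S"
  shows "\<not> (\<exists>d::nat\<ge>1. \<forall>m::nat\<ge>1. m * d \<in> S)"
proof
  assume "\<exists>d::nat\<ge>1. \<forall>m::nat\<ge>1. m * d \<in> S"
  then obtain d :: nat where "d \<ge> 1" "\<forall>m\<ge>1. m * d \<in> S"
    by blast
  then have "(B + 1) * d \<in> S" for B
    using le_add2 by blast
  moreover obtain B where "\<forall>k\<in>S. k \<le> B"
    using assms finite_nat_set_iff_bounded_le by blast
  ultimately have "(B + 1) * d \<le> B"
    by blast
  moreover have "B + 1 \<le> (B + 1) * d"
    using mult_le_mono2[OF \<open>d \<ge> 1\<close>, of "B + 1"] by simp
  ultimately show False
    by simp
qed

lemma finite_dim_finite_exponents:
  assumes "finite_dim V"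
  shows "finite (monomial_exponents V)"
proof -
  obtain T where T: "finite T" "V \<subseteq> poly_span T"
    using assms unfolding finite_dim_def by blast
  have "k \<le> (\<Sum>s\<in>T. degree s)" if "k \<in> monomial_exponents V" for k
    using degree_in_poly_span_le[OF T(1), of "monom 1 k"] that T(2)
    by (auto simp: monomial_exponents_def degree_monom_eq)
  then show ?thesis
    using finite_nat_set_iff_bounded_le by blast
qed

lemma exponents_subset_of_monom_span:
  fixes V :: "'a::field poly set"
  assumes "V = poly_span (range (\<lambda>i. monom 1 (n i)))"
  shows "monomial_exponents V \<subseteq> range n"
proof
  fix k
  assume "k \<in> monomial_exponents V"
  then have "monom 1 k \<in> poly_span (range (\<lambda>i. monom (1::'a) (n i)))"
    using assms by (simp add: monomial_exponents_def)
  also have "range (\<lambda>i. monom 1 (n i)) = monom 1 ` range n"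
    by auto
  finally show "k \<in> range n"
    by (rule coeff_in_poly_span_monoms) simp
qed

lemma mathieu_subspaceI:
  assumes "poly_subspace V"
    and "\<And>a b. a \<noteq> 0 \<Longrightarrow> \<forall>m\<ge>1. a ^ m \<in> V \<Longrightarrow> \<exists>N. \<forall>m\<ge>N. a ^ m * b \<in> V"
  shows "mathieu_subspace V"
proof -
  have "\<exists>N. \<forall>m\<ge>N. 0 ^ m * b \<in> V" for b :: "'a poly"
    using assms(1) by (intro exI[of _ 1]) (auto simp: poly_subspace_def power_0_left)
  with assms show ?thesis
    unfolding mathieu_subspace_def by metis
qed

lemma mathieu_if_no_multiples:
  assumes "homogeneous_subspace V" "1 \<notin> V"
    and "\<not> (\<exists>d::nat\<ge>1. \<forall>m::nat\<ge>1. m * d \<in> monomial_exponents V)"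
  shows "mathieu_subspace V"
proof (rule mathieu_subspaceI)
  show "poly_subspace V"
    using assms(1) by (rule homogeneous_subspace_imp_poly_subspace)
next
  fix a b :: "'a poly"
  assume powers: "\<forall>m\<ge>1. a ^ m \<in> V" and "a \<noteq> 0"
  then have multiples: "\<forall>m\<ge>1. m * degree a \<in> monomial_exponents V"
    using homogeneous_powers_degree_multiples[OF assms(1)] by blast
  have "degree a \<noteq> 0"
  proof
    assume "degree a = 0"
    then have "0 \<in> monomial_exponents V"
      using multiples by (metis mult_1 order.refl)
    with assms(2) show False
      by (simp add: one_in_iff_zero_exponent)
  qed
  with multiples have "\<exists>d::nat\<ge>1. \<forall>m::nat\<ge>1. m * d \<in> monomial_exponents V"
    by (intro exI[of _ "degree a"]) simp
  with assms(3) show "\<exists>N. \<forall>m\<ge>N. a ^ m * b \<in> V"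
    by contradiction
qed

lemma monom_dvd_power_if_coeff_0:
  assumes "coeff a 0 = 0"
  shows "monom 1 m dvd a ^ m"
proof -
  have "monom 1 1 dvd a"
    using assms by (simp add: monom_1_dvd_iff')
  then have "monom 1 1 ^ m dvd a ^ m"
    by (rule dvd_power_same)
  then show ?thesis
    by (simp add: monom_power)
qed

lemma mathieu_if_contains_ideal:
  assumes "homogeneous_subspace V" "1 \<notin> V" "{monom 1 N * p | p. True} \<subseteq> V"
  shows "mathieu_subspace V"
proof (rule mathieu_subspaceI)
  show "poly_subspace V"
    using assms(1) by (rule homogeneous_subspace_imp_poly_subspace)
next
  fix a b :: "'a poly"
  assume "\<forall>m\<ge>1. a ^ m \<in> V"
  then have "a \<in> V"
    by (metis order.refl power_one_right)
  then have "coeff a 0 = 0"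
    using assms(1,2) homogeneous_subspace_mem_iff one_in_iff_zero_exponent by blast
  have "a ^ m * b \<in> V" if "m \<ge> N" for m
  proof -
    have "monom 1 N dvd monom (1::'a) m"
      using that by (simp add: monom_1_dvd_iff')
    also have "\<dots> dvd a ^ m * b"
      using monom_dvd_power_if_coeff_0[OF \<open>coeff a 0 = 0\<close>] by (rule dvd_mult2)
    finally obtain q where "a ^ m * b = monom 1 N * q"
      by (rule dvdE)
    then show ?thesis
      using assms(3) by blast
  qed
  then show "\<exists>N. \<forall>m\<ge>N. a ^ m * b \<in> V"
    by blast
qed

lemma mathieu_one_mem_eq_UNIV:
  assumes "mathieu_subspace V" "1 \<in> V"
  shows "V = UNIV"
proof -
  have "monom 1 k \<in> V" for k
  proof -
    have "\<forall>m\<ge>1. (1::'a poly) ^ m \<in> V"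
      using assms(2) by simp
    then obtain N where "\<forall>m\<ge>N. 1 ^ m * monom 1 k \<in> V"
      using assms(1) unfolding mathieu_subspace_def by blast
    then show ?thesis
      by auto
  qed
  moreover have "poly_subspace V"
    using assms(1) by (simp add: mathieu_subspace_def)
  ultimately show ?thesis
    using poly_subspace_monomsI by blast
qed

text \<open>Each of the finitely many residues j < d yields its own Mathieu threshold for
b = x^j; beyond the largest one, every x^(m d + j) = (x^d)^m x^j lies in V.\<close>
lemma mathieu_monoms_eventually_mem:
  assumes "mathieu_subspace V" "d \<ge> 1" "\<forall>m\<ge>1. monom 1 (m * d) \<in> V"
  shows "\<exists>N. \<forall>k\<ge>N. monom 1 k \<in> V"
proof -
  have "\<forall>m\<ge>1. monom 1 d ^ m \<in> V"
    using assms(3) by (simp add: monom_power mult.commute)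
  then have "\<forall>j\<in>{..<d}. eventually (\<lambda>m. monom 1 d ^ m * monom 1 j \<in> V) sequentially"
    using assms(1) unfolding mathieu_subspace_def eventually_sequentially by blast
  then have "eventually (\<lambda>m. \<forall>j\<in>{..<d}. monom 1 d ^ m * monom 1 j \<in> V) sequentially"
    by (simp add: eventually_ball_finite)
  then obtain M where M: "\<And>m j. m \<ge> M \<Longrightarrow> j < d \<Longrightarrow> monom 1 d ^ m * monom 1 j \<in> V"
    unfolding eventually_sequentially by blast
  have "monom 1 k \<in> V" if "k \<ge> M * d" for k
  proof -
    have "k div d \<ge> M"
      using that assms(2) by (metis div_le_mono nonzero_mult_div_cancel_right not_one_le_zero)
    then have "monom 1 d ^ (k div d) * monom 1 (k mod d) \<in> V"
      using assms(2) by (intro M) auto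
    then show ?thesis
      by (simp add: monom_power mult_monom mult.commute)
  qed
  then show ?thesis
    by blast
qed

lemma poly_subspace_contains_ideal:
  assumes "poly_subspace V" "\<forall>k\<ge>N. monom 1 k \<in> V"
  shows "{monom 1 N * p | p. True} \<subseteq> V"
proof clarify
  fix p :: "'a poly"
  show "monom 1 N * p \<in> V"
  proof (rule poly_subspace_monomsI[OF assms(1)])
    fix i
    assume "coeff (monom 1 N * p) i \<noteq> 0"
    then have "i \<ge> N"
      by (simp add: coeff_monom_mult split: if_splits)
    then show "monom 1 i \<in> V"
      using assms(2) by blast
  qed
qed

lemma mathieu_contains_ideal:
  assumes "mathieu_subspace V" "d \<ge> 1" "\<forall>m\<ge>1. m * d \<in> monomial_exponents V"
  shows "\<exists>N\<ge>1. {monom 1 N * p | p. True} \<subseteq> V"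
proof -
  obtain N where "\<forall>k\<ge>N. monom 1 k \<in> V"
    using mathieu_monoms_eventually_mem[OF assms(1,2)] assms(3)
    by (auto simp: monomial_exponents_def)
  then have "{monom 1 (N + 1) * p | p. True} \<subseteq> V"
    using assms(1) poly_subspace_contains_ideal[of V "N + 1"]
    by (simp add: mathieu_subspace_def)
  then show ?thesis
    using le_add2 by blast
qed

lemma mathieu_if_finite_dim:
  assumes "homogeneous_subspace V" "finite_dim V" "1 \<notin> V"
  shows "mathieu_subspace V"
  using assms(1,3) finite_imp_not_all_multiples[OF finite_dim_finite_exponents[OF assms(2)]]
  by (rule mathieu_if_no_multiples)

lemma mathieu_if_monom_sequence_span:
  assumes "homogeneous_subspace V" "\<forall>i. n i \<ge> 1" "V = poly_span (range (\<lambda>i. monom 1 (n i)))"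
    and "\<not> (\<exists>d::nat\<ge>1. \<forall>m::nat\<ge>1. m * d \<in> range n)"
  shows "mathieu_subspace V"
proof (rule mathieu_if_no_multiples[OF assms(1)])
  have exponents: "monomial_exponents V \<subseteq> range n"
    using assms(3) by (rule exponents_subset_of_monom_span)
  moreover have "0 \<notin> range n"
    using assms(2) by (metis not_one_le_zero rangeE)
  ultimately show "1 \<notin> V"
    using one_in_iff_zero_exponent by blast
  show "\<not> (\<exists>d::nat\<ge>1. \<forall>m::nat\<ge>1. m * d \<in> monomial_exponents V)"
    using assms(4) exponents by blast
qed

lemma homogeneous_subspace_finite_dimI:
  assumes "homogeneous_subspace V" "finite (monomial_exponents V)"
  shows "finite_dim V"
  unfolding finite_dim_def
proof (intro exI conjI)
  show "finite (monom 1 ` monomial_exponents V)"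
    using assms(2) by simp
  show "V \<subseteq> poly_span (monom 1 ` monomial_exponents V)"
    using homogeneous_subspace_eq_span[OF assms(1)] by (rule equalityD1)
qed

lemma homogeneous_enumerate_exponents:
  fixes V :: "'a::field poly set"
  assumes "homogeneous_subspace V" "infinite (monomial_exponents V)" "1 \<notin> V"
  obtains n :: "nat \<Rightarrow> nat" where "strict_mono n" "\<forall>i. n i \<ge> 1"
    "V = poly_span (range (\<lambda>i. monom 1 (n i)))" "range n = monomial_exponents V"
proof -
  let ?S = "monomial_exponents V"
  have mono: "strict_mono (enumerate ?S)"
    using assms(2) by (simp add: strict_mono_def)
  have range: "range (enumerate ?S) = ?S"
    using bij_enumerate[OF assms(2)] by (simp add: bij_betw_def)
  have pos: "\<forall>i. enumerate ?S i \<ge> 1"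
    using range assms(3) one_in_iff_zero_exponent by (metis less_one not_le rangeI)
  have span: "V = poly_span (range (\<lambda>i. monom 1 (enumerate ?S i)))"
    using homogeneous_subspace_eq_span[OF assms(1)] range by (simp add: image_image[symmetric])
  show ?thesis
    by (rule that[OF mono pos span range])
qed

theorem proposition3p5:
  fixes V :: "'a::field poly set"
  assumes "homogeneous_subspace V"
  shows "mathieu_subspace V \<longleftrightarrow>
    V = UNIV
    \<or> (finite_dim V \<and> 1 \<notin> V)
    \<or> (1 \<notin> V \<and> (\<exists>N\<ge>1. {monom 1 N * p | p. True} \<subseteq> V))
    \<or> (\<exists>n :: nat \<Rightarrow> nat. strict_mono n \<and> (\<forall>i. n i \<ge> 1)
         \<and> V = poly_span (range (\<lambda>i. monom 1 (n i)))
         \<and> \<not> (\<exists>d::nat\<ge>1. \<forall>m::nat\<ge>1. m * d \<in> range n))"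
  (is "_ \<longleftrightarrow> ?C1 \<or> ?C2 \<or> ?C3 \<or> ?C4")
proof
  let ?S = "monomial_exponents V"
  assume M: "mathieu_subspace V"
  consider (one) "1 \<in> V"
    | (multiples) d :: nat where "1 \<notin> V" "d \<ge> 1" "\<forall>m\<ge>1. m * d \<in> ?S"
    | (finite) "1 \<notin> V" "finite ?S"
    | (infinite) "1 \<notin> V" "infinite ?S" "\<not> (\<exists>d::nat\<ge>1. \<forall>m::nat\<ge>1. m * d \<in> ?S)"
    by blast
  then show "?C1 \<or> ?C2 \<or> ?C3 \<or> ?C4"
  proof cases
    case one
    then show ?thesis
      using mathieu_one_mem_eq_UNIV[OF M] by blast
  next
    case multiples
    then show ?thesis
      using mathieu_contains_ideal[OF M] by blast
  next
    case finite
    then show ?thesis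
      using homogeneous_subspace_finite_dimI[OF assms] by blast
  next
    case infinite
    then obtain n :: "nat \<Rightarrow> nat" where n: "strict_mono n" "\<forall>i. n i \<ge> 1"
      "V = poly_span (range (\<lambda>i. monom 1 (n i)))" and range_n: "range n = ?S"
      using homogeneous_enumerate_exponents[OF assms] by blast
    have "\<not> (\<exists>d::nat\<ge>1. \<forall>m::nat\<ge>1. m * d \<in> range n)"
      unfolding range_n by (rule infinite(3))
    with n have ?C4
      by blast
    then show ?thesis
      by (intro disjI2)
  qed
next
  assume "?C1 \<or> ?C2 \<or> ?C3 \<or> ?C4"
  then show "mathieu_subspace V"
  proof (elim disjE conjE exE)
    assume "V = UNIV"
    then show ?thesis
      by (simp add: mathieu_subspace_def poly_subspace_def)
  next
    assume "finite_dim V" "1 \<notin> V"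
    then show ?thesis
      by (rule mathieu_if_finite_dim[OF assms])
  next
    fix N :: nat
    assume "1 \<notin> V" "{monom 1 N * p | p. True} \<subseteq> V"
    then show ?thesis
      by (rule mathieu_if_contains_ideal[OF assms])
  next
    fix n :: "nat \<Rightarrow> nat"
    assume "strict_mono n" and sequence: "\<forall>i. n i \<ge> 1" "V = poly_span (range (\<lambda>i. monom 1 (n i)))"
      "\<not> (\<exists>d::nat\<ge>1. \<forall>m::nat\<ge>1. m * d \<in> range n)"
    from sequence show ?thesis
      by (rule mathieu_if_monom_sequence_span[OF assms])
  qed
qed

end
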